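(* Let $\Omega\subset(\mathbb R+i\mathbb T)^s$ be a finite set of $N=\#\Omega$ frequencies, $\mathbb T=\mathbb R/2\pi\mathbb Z$, and let $f(x)=\sum_{\omega\in\Omega}f_\omega e^{\omega^Tx}$ with all $f_\omega\in\mathbb C\setminus\{0\}$. Let $X_\Omega=\{x_\omega=(e^{\omega_1},\dots,e^{\omega_s}):\omega\in\Omega\}$, $I_\Omega=\{p\in\Pi:p(x_\omega)=0\ \forall\omega\in\Omega\}$, $\Upsilon_N=\{\alpha\in\mathbb N_0^s:\prod_j(\alpha_j+1)\le N\}$, and let $A\subset\mathbb N_0^s$ be finite. Define $F_{\Upsilon_N,A}=[f(\alpha+\beta)]_{\alpha\in\Upsilon_N,\beta\in A}$. Then a vector $p=(p_\beta)_{\beta\in A}\in\mathbb C^A$ satisfies $F_{\Upsilon_N,A}\,p=0$ if and only if the polynomial $p(x)=\sum_{\beta\in A}p_\beta x^\beta$ belongs to $I_\Omega\cap\Pi_A$.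
   Context: $\Pi=\mathbb C[x_1,\dots,x_s]$; for $A\subset\mathbb N_0^s$, $\Pi_A$ is the span of the monomials $x^\beta$, $\beta\in A$, and a vector in $\mathbb C^A$ is identified with the polynomial in $\Pi_A$ having these coefficients. Restricting imaginary parts of frequencies to $\mathbb T$ makes the points $x_\omega$, $\omega\in\Omega$, pairwise distinct. *)

theory Defs
  imports Complex_Main
begin

text \<open>Dimension s is encoded by a finite index type 's; multi-indices are
  functions 's \<Rightarrow> nat, frequencies and points are functions 's \<Rightarrow> complex.\<close>

definition point_of :: "('s \<Rightarrow> complex) \<Rightarrow> ('s \<Rightarrow> complex)" where
  "point_of \<omega> = (\<lambda>j. exp (\<omega> j))"

definition monomial_val :: "('s::finite \<Rightarrow> nat) \<Rightarrow> ('s \<Rightarrow> complex) \<Rightarrow> complex" where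
  "monomial_val \<beta> x = (\<Prod>j\<in>UNIV. x j ^ \<beta> j)"

definition poly_eval :: "('s::finite \<Rightarrow> nat) set \<Rightarrow> (('s \<Rightarrow> nat) \<Rightarrow> complex) \<Rightarrow> ('s \<Rightarrow> complex) \<Rightarrow> complex" where
  "poly_eval A p x = (\<Sum>\<beta>\<in>A. p \<beta> * monomial_val \<beta> x)"

definition in_vanishing_ideal :: "('s::finite \<Rightarrow> complex) set \<Rightarrow> ('s \<Rightarrow> nat) set \<Rightarrow> (('s \<Rightarrow> nat) \<Rightarrow> complex) \<Rightarrow> bool" where
  "in_vanishing_ideal \<Omega> A p \<longleftrightarrow> (\<forall>\<omega>\<in>\<Omega>. poly_eval A p (point_of \<omega>) = 0)"

definition expsum :: "(('s::finite \<Rightarrow> complex) \<Rightarrow> complex) \<Rightarrow> ('s \<Rightarrow> complex) set \<Rightarrow> ('s \<Rightarrow> nat) \<Rightarrow> complex" where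
  "expsum c \<Omega> \<alpha> = (\<Sum>\<omega>\<in>\<Omega>. c \<omega> * exp (\<Sum>j\<in>UNIV. \<omega> j * of_nat (\<alpha> j)))"

definition Upsilon :: "nat \<Rightarrow> ('s::finite \<Rightarrow> nat) set" where
  "Upsilon N = {\<alpha>. (\<Prod>j\<in>UNIV. \<alpha> j + 1) \<le> N}"

end

theory Submission
  imports Defs "HOL-Analysis.Complex_Transcendental"
begin

text \<open>Writing x_\<omega> for the points, f(\<alpha> + \<beta>) = \<Sum>\<omega>. f_\<omega> x_\<omega>^\<alpha> x_\<omega>^\<beta>, so
  F p = 0 says that the weights f_\<omega> p(x_\<omega>) are annihilated by the matrix
  [x_\<omega>^\<alpha>] with \<alpha> \<in> \<Upsilon>_N. Since f_\<omega> \<noteq> 0, the theorem reduces to the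
  injectivity of that matrix on N distinct points. This is proved by induction
  on N: choose a coordinate j in which the points take m \<ge> 2 values and a value v
  whose fibre has the minimal size k, so that m k \<le> N. Multiplying by
  \<Prod>(x_j - u) over the other values u kills all points off the fibre and only
  uses the shifts \<alpha> + i e_j, i < m, which stay in \<Upsilon>_N for \<alpha> \<in> \<Upsilon>_k; so the
  weights vanish on the fibre by induction, and on the rest by induction
  with N - k.\<close>

lemma monomial_val_fun_upd_add:
  fixes x :: "'s::finite \<Rightarrow> complex"
  shows "monomial_val (\<alpha>(j := \<alpha> j + i)) x = x j ^ i * monomial_val \<alpha> x"
proof -
  have "monomial_val (\<alpha>(j := \<alpha> j + i)) x = x j ^ (\<alpha> j + i) * (\<Prod>l\<in>UNIV-{j}. x l ^ \<alpha> l)"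
    unfolding monomial_val_def by (subst prod.remove[of _ j]) auto
  also have "\<dots> = x j ^ i * (x j ^ \<alpha> j * (\<Prod>l\<in>UNIV-{j}. x l ^ \<alpha> l))"
    by (simp add: power_add)
  also have "x j ^ \<alpha> j * (\<Prod>l\<in>UNIV-{j}. x l ^ \<alpha> l) = monomial_val \<alpha> x"
    unfolding monomial_val_def by (subst (2) prod.remove[of _ j]) auto
  finally show ?thesis .
qed

lemma monomial_val_zero [simp]: "monomial_val (\<lambda>_. 0) x = 1"
  unfolding monomial_val_def by simp

lemma Upsilon_mono: "a \<le> b \<Longrightarrow> Upsilon a \<subseteq> Upsilon b"
  unfolding Upsilon_def by auto

lemma Upsilon_fun_upd_add:
  fixes \<alpha> :: "'s::finite \<Rightarrow> nat"
  assumes "\<alpha> \<in> Upsilon k" "m * k \<le> n" "i < m"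
  shows "\<alpha>(j := \<alpha> j + i) \<in> Upsilon n"
proof -
  let ?R = "\<Prod>l\<in>UNIV-{j}. \<alpha> l + 1"
  have split: "(\<Prod>l\<in>UNIV. \<alpha> l + 1) = (\<alpha> j + 1) * ?R"
    by (subst prod.remove[of _ j]) auto
  have "\<alpha> j + i + 1 \<le> (\<alpha> j + 1) * (i + 1)" by (simp add: algebra_simps)
  also have "\<dots> \<le> (\<alpha> j + 1) * m" using assms(3) by (intro mult_le_mono2) simp
  finally have factor: "\<alpha> j + i + 1 \<le> (\<alpha> j + 1) * m" .
  have "(\<Prod>l\<in>UNIV. (\<alpha>(j := \<alpha> j + i)) l + 1) = (\<alpha> j + i + 1) * ?R"
    by (subst prod.remove[of _ j]) auto
  also have "\<dots> \<le> ((\<alpha> j + 1) * m) * ?R" using factor by (rule mult_right_mono) simp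
  also have "\<dots> = m * (\<Prod>l\<in>UNIV. \<alpha> l + 1)" unfolding split by (simp add: algebra_simps)
  also have "\<dots> \<le> m * k" using assms(1) unfolding Upsilon_def by simp
  finally show ?thesis using assms(2) unfolding Upsilon_def by simp
qed

lemma sum_prod_diff_monomial_eq_0:
  fixes g :: "'i \<Rightarrow> 's::finite \<Rightarrow> complex"
  assumes "finite U"
    and "\<forall>i\<le>card U. (\<Sum>l\<in>I. d l * monomial_val (\<alpha>(j := \<alpha> j + i)) (g l)) = 0"
  shows "(\<Sum>l\<in>I. d l * (\<Prod>u\<in>U. g l j - u) * monomial_val \<alpha> (g l)) = 0"
  using assms
proof (induction U arbitrary: \<alpha> rule: finite_induct)
  case empty
  then show ?case using spec[OF empty(1), of 0] by simp
next
  case (insert u F)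
  define \<alpha>' where "\<alpha>' = \<alpha>(j := \<alpha> j + 1)"
  have shifted: "(\<Sum>l\<in>I. d l * (\<Prod>u\<in>F. g l j - u) * monomial_val \<alpha>' (g l)) = 0"
  proof (rule insert.IH, intro allI impI)
    fix i assume "i \<le> card F"
    then show "(\<Sum>l\<in>I. d l * monomial_val (\<alpha>'(j := \<alpha>' j + i)) (g l)) = 0"
      using insert insert.prems[rule_format, of "Suc i"] unfolding \<alpha>'_def by simp
  qed
  have unshifted: "(\<Sum>l\<in>I. d l * (\<Prod>u\<in>F. g l j - u) * monomial_val \<alpha> (g l)) = 0"
    using insert by (intro insert.IH) auto
  have "\<And>x. monomial_val \<alpha>' x = x j * monomial_val \<alpha> x"
    using monomial_val_fun_upd_add[of \<alpha> j 1] unfolding \<alpha>'_def by simp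
  then have "\<And>l. d l * (\<Prod>u\<in>insert u F. g l j - u) * monomial_val \<alpha> (g l)
      = d l * (\<Prod>u\<in>F. g l j - u) * monomial_val \<alpha>' (g l)
        - u * (d l * (\<Prod>u\<in>F. g l j - u) * monomial_val \<alpha> (g l))"
    using insert by (simp add: algebra_simps)
  then have "(\<Sum>l\<in>I. d l * (\<Prod>u\<in>insert u F. g l j - u) * monomial_val \<alpha> (g l))
      = (\<Sum>l\<in>I. d l * (\<Prod>u\<in>F. g l j - u) * monomial_val \<alpha>' (g l))
        - u * (\<Sum>l\<in>I. d l * (\<Prod>u\<in>F. g l j - u) * monomial_val \<alpha> (g l))"
    by (simp add: sum_distrib_left sum_subtractf)
  then show ?case using shifted unshifted by simp
qed

lemma exists_coordinate_small_fibre: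
  fixes g :: "'i \<Rightarrow> 's \<Rightarrow> complex"
  assumes "finite I" "inj_on g I" "card I \<ge> 2"
  obtains j v where "v \<in> (\<lambda>l. g l j) ` I" "card ((\<lambda>l. g l j) ` I) \<ge> 2"
    "card ((\<lambda>l. g l j) ` I) * card {l\<in>I. g l j = v} \<le> card I"
proof -
  obtain i1 i2 where i: "i1 \<in> I" "i2 \<in> I" "i1 \<noteq> i2"
    using assms(1,3) card_le_Suc0_iff_eq[OF assms(1)] by force
  then obtain j where j: "g i1 j \<noteq> g i2 j" using assms(2) by (metis inj_onD ext)
  define V where "V = (\<lambda>l. g l j) ` I"
  define Y where "Y = (\<lambda>v. {l\<in>I. g l j = v})"
  have finV: "finite V" and finY: "\<And>w. finite (Y w)"
    unfolding V_def Y_def using assms(1) by auto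
  have "card {g i1 j, g i2 j} \<le> card V"
    using finV i by (intro card_mono) (auto simp: V_def)
  then have V2: "card V \<ge> 2" using j by simp
  define k where "k = Min ((\<lambda>v. card (Y v)) ` V)"
  have "k \<in> (\<lambda>v. card (Y v)) ` V"
    unfolding k_def using finV V2 by (intro Min_in) auto
  then obtain v where v: "v \<in> V" "card (Y v) = k" by auto
  have "card V * k = (\<Sum>w\<in>V. k)" by simp
  also have "\<dots> \<le> (\<Sum>w\<in>V. card (Y w))"
    using finV unfolding k_def by (intro sum_mono) simp
  also have "\<dots> = card (\<Union>w\<in>V. Y w)"
    using finV finY by (subst card_UN_disjoint) (auto simp: Y_def)
  also have "(\<Union>w\<in>V. Y w) = I" unfolding V_def Y_def by auto
  finally show ?thesis using that v V2 unfolding V_def Y_def by blast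
qed

lemma fibre_weights_annihilated:
  fixes g :: "'i \<Rightarrow> 's::finite \<Rightarrow> complex" and I :: "'i set" and j :: 's
  defines "V \<equiv> (\<lambda>l. g l j) ` I"
  assumes "finite I" "v \<in> V" "card V * k \<le> n"
    and "\<forall>\<alpha>\<in>Upsilon n. (\<Sum>l\<in>I. d l * monomial_val \<alpha> (g l)) = 0"
    and "\<alpha> \<in> Upsilon k"
  shows "(\<Sum>l\<in>{l\<in>I. g l j = v}. (d l * (\<Prod>u\<in>V-{v}. g l j - u)) * monomial_val \<alpha> (g l)) = 0"
proof -
  let ?Q = "\<lambda>l. \<Prod>u\<in>V-{v}. g l j - u"
  have finV: "finite V" unfolding V_def using assms(2) by simp
  have "(\<Sum>l\<in>I. d l * ?Q l * monomial_val \<alpha> (g l)) = 0"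
  proof (rule sum_prod_diff_monomial_eq_0, use finV in simp, intro allI impI)
    fix i assume "i \<le> card (V - {v})"
    then have "i < card V" using assms(3) finV card_Diff1_less by fastforce
    then show "(\<Sum>l\<in>I. d l * monomial_val (\<alpha>(j := \<alpha> j + i)) (g l)) = 0"
      using assms(4-6) Upsilon_fun_upd_add by blast
  qed
  moreover have "\<forall>l\<in>I - {l\<in>I. g l j = v}. ?Q l = 0"
    using finV unfolding V_def by (auto intro: prod_zero)
  ultimately show ?thesis
    using assms(2) by (subst (asm) sum.mono_neutral_right[of I "{l\<in>I. g l j = v}"]) auto
qed

lemma Upsilon_monomials_independent:
  fixes g :: "'i \<Rightarrow> 's::finite \<Rightarrow> complex"
  assumes "finite I" "card I = n" "inj_on g I"
    and "\<forall>\<alpha>\<in>Upsilon n. (\<Sum>l\<in>I. d l * monomial_val \<alpha> (g l)) = 0"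
  shows "\<forall>l\<in>I. d l = 0"
  using assms
proof (induction n arbitrary: I d rule: less_induct)
  case (less n I d)
  consider "n = 0" | "n = 1" | "n \<ge> 2" by linarith
  then show ?case
  proof cases
    case 1
    then show ?thesis using less.prems by simp
  next
    case 2
    with less.prems(2) have "card I = 1" by simp
    then obtain i where I: "I = {i}" by (rule card_1_singletonE)
    have "(\<lambda>_. 0) \<in> (Upsilon n :: ('s \<Rightarrow> nat) set)" using 2 unfolding Upsilon_def by simp
    then have "(\<Sum>l\<in>I. d l * monomial_val (\<lambda>_. 0) (g l)) = 0" using less.prems(4) by blast
    then show ?thesis using I by simp
  next
    case 3
    with less.prems(2) have "card I \<ge> 2" by simp
    then obtain j v where v: "v \<in> (\<lambda>l. g l j) ` I"
      and V2: "card ((\<lambda>l. g l j) ` I) \<ge> 2"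
      and small: "card ((\<lambda>l. g l j) ` I) * card {l\<in>I. g l j = v} \<le> card I"
      by (rule exists_coordinate_small_fibre[OF less.prems(1,3)])
    define V where "V = (\<lambda>l. g l j) ` I"
    define Y where "Y = {l\<in>I. g l j = v}"
    define k where "k = card Y"
    have mk: "card V * k \<le> n" using small less.prems(2) unfolding V_def Y_def k_def by simp
    have finV: "finite V" and finY: "finite Y" and YI: "Y \<subseteq> I"
      unfolding V_def Y_def using less.prems(1) by auto
    have "Y \<noteq> {}" using v unfolding Y_def by auto
    then have k1: "k \<ge> 1" using finY unfolding k_def by (simp add: Suc_leI card_gt_0_iff)
    have "2 * k \<le> card V * k" using V2 unfolding V_def by (rule mult_le_mono1)
    then have kn: "k < n" using mk k1 by linarith
    have "\<forall>l\<in>Y. d l * (\<Prod>u\<in>V-{v}. g l j - u) = 0"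
      using fibre_weights_annihilated[of I v g j k n d, folded V_def Y_def] less.prems(1,4) v mk
      by (intro less.IH[OF kn finY _ inj_on_subset[OF less.prems(3) YI]]) (auto simp: k_def V_def)
    moreover have "\<forall>l\<in>Y. (\<Prod>u\<in>V-{v}. g l j - u) \<noteq> 0"
      using finV unfolding Y_def by auto
    ultimately have fibre: "\<forall>l\<in>Y. d l = 0" by auto
    have "\<forall>\<alpha>\<in>Upsilon (n - k). (\<Sum>l\<in>I - Y. d l * monomial_val \<alpha> (g l)) = 0"
      using less.prems(1,4) Upsilon_mono[of "n - k" n] fibre YI by (auto simp: sum_diff)
    then have "\<forall>l\<in>I - Y. d l = 0"
      using less.prems finY YI k1 kn
      by (intro less.IH[of "n - k"]) (auto simp: k_def card_Diff_subset intro: inj_on_subset)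
    then show ?thesis using fibre by blast
  qed
qed

lemma inj_on_point_of:
  assumes "\<forall>\<omega>\<in>\<Omega>. \<forall>j. 0 \<le> Im (\<omega> j) \<and> Im (\<omega> j) < 2 * pi"
  shows "inj_on point_of \<Omega>"
proof (rule inj_onI, rule ext)
  fix a b j assume ab: "a \<in> \<Omega>" "b \<in> \<Omega>" and "point_of a = point_of b"
  then have "exp (a j) = exp (b j)" unfolding point_of_def by meson
  then obtain n :: int where n: "a j = b j + (of_int (2 * n) * pi) * \<i>" by (auto simp: exp_eq)
  then have "Im (a j) = Im (b j) + 2 * (of_int n * pi)" by simp
  moreover have "0 \<le> Im (a j)" "Im (a j) < 2 * pi" "0 \<le> Im (b j)" "Im (b j) < 2 * pi"
    using assms ab by auto
  ultimately have "of_int n * pi < 1 * pi" "(-1) * pi < of_int n * pi" by linarith+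
  then have "of_int n < (1::real)" "(-1::real) < of_int n"
    using pi_gt_zero mult_less_cancel_right_pos by blast+
  then show "a j = b j" using n by simp
qed

lemma expsum_add:
  "expsum c \<Omega> (\<lambda>j. \<alpha> j + \<beta> j) =
   (\<Sum>\<omega>\<in>\<Omega>. c \<omega> * monomial_val \<alpha> (point_of \<omega>) * monomial_val \<beta> (point_of \<omega>))"
proof -
  have "exp (\<Sum>j\<in>UNIV. \<omega> j * of_nat (\<alpha> j + \<beta> j)) = (\<Prod>j\<in>UNIV. exp (\<omega> j) ^ (\<alpha> j + \<beta> j))"
    for \<omega> :: "'a \<Rightarrow> complex"
    by (simp add: exp_sum exp_of_nat_mult[symmetric] mult.commute)
  then show ?thesis
    unfolding expsum_def monomial_val_def point_of_def
    by (simp add: power_add prod.distrib mult.assoc)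
qed

lemma sum_expsum_eq_sum_poly_eval:
  assumes "finite \<Omega>" "finite A"
  shows "(\<Sum>\<beta>\<in>A. expsum c \<Omega> (\<lambda>j. \<alpha> j + \<beta> j) * p \<beta>) =
    (\<Sum>\<omega>\<in>\<Omega>. (c \<omega> * poly_eval A p (point_of \<omega>)) * monomial_val \<alpha> (point_of \<omega>))"
proof -
  have "(\<Sum>\<beta>\<in>A. expsum c \<Omega> (\<lambda>j. \<alpha> j + \<beta> j) * p \<beta>) =
      (\<Sum>\<beta>\<in>A. \<Sum>\<omega>\<in>\<Omega>. c \<omega> * monomial_val \<alpha> (point_of \<omega>) * (p \<beta> * monomial_val \<beta> (point_of \<omega>)))"
    unfolding expsum_add sum_distrib_right by (intro sum.cong refl) (simp add: algebra_simps)
  also have "\<dots> = (\<Sum>\<omega>\<in>\<Omega>. \<Sum>\<beta>\<in>A. c \<omega> * monomial_val \<alpha> (point_of \<omega>) * (p \<beta> * monomial_val \<beta> (point_of \<omega>)))"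
    by (rule sum.swap)
  finally show ?thesis
    unfolding poly_eval_def by (simp add: sum_distrib_left algebra_simps)
qed

theorem theorem28:
  fixes \<Omega> :: "('s::finite \<Rightarrow> complex) set"
    and c :: "('s \<Rightarrow> complex) \<Rightarrow> complex"
    and A :: "('s \<Rightarrow> nat) set"
    and p :: "('s \<Rightarrow> nat) \<Rightarrow> complex"
  assumes "finite \<Omega>"
    and "\<forall>\<omega>\<in>\<Omega>. \<forall>j. 0 \<le> Im (\<omega> j) \<and> Im (\<omega> j) < 2 * pi"
    and "\<forall>\<omega>\<in>\<Omega>. c \<omega> \<noteq> 0"
    and "finite A"
  shows "(\<forall>\<alpha>\<in>Upsilon (card \<Omega>). (\<Sum>\<beta>\<in>A. expsum c \<Omega> (\<lambda>j. \<alpha> j + \<beta> j) * p \<beta>) = 0)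
         \<longleftrightarrow> in_vanishing_ideal \<Omega> A p"
proof
  assume "\<forall>\<alpha>\<in>Upsilon (card \<Omega>). (\<Sum>\<beta>\<in>A. expsum c \<Omega> (\<lambda>j. \<alpha> j + \<beta> j) * p \<beta>) = 0"
  then have "\<forall>\<omega>\<in>\<Omega>. c \<omega> * poly_eval A p (point_of \<omega>) = 0"
    using assms(1,4) by (intro Upsilon_monomials_independent[OF assms(1) refl inj_on_point_of[OF assms(2)]])
      (simp add: sum_expsum_eq_sum_poly_eval)
  then show "in_vanishing_ideal \<Omega> A p"
    unfolding in_vanishing_ideal_def using assms(3) by simp
next
  assume "in_vanishing_ideal \<Omega> A p"
  then show "\<forall>\<alpha>\<in>Upsilon (card \<Omega>). (\<Sum>\<beta>\<in>A. expsum c \<Omega> (\<lambda>j. \<alpha> j + \<beta> j) * p \<beta>) = 0"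
    using assms(1,4) unfolding in_vanishing_ideal_def by (simp add: sum_expsum_eq_sum_poly_eval)
qed

end
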